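(* Let $S$ be a multiplicatively closed subset of an $r$-lattice $L$ (with $1\in S$, $0\notin S$). Then: (1) if $j$ is a principal element and $i$ is an $S$-compact element of $L$, then $i\cdot j$ is $S$-compact; (2) if $k$ is a compact element and $i$ is an $S$-compact element of $L$, then $k\vee i$ is $S$-compact.
   Context: A multiplicative lattice is a complete lattice with a commutative, associative multiplication distributing over arbitrary joins, with $1$ as identity; $L_*$ is the set of compact elements; $(a:b)=\bigvee\{x\mid xb\le a\}$. An element $m$ is principal if $a\wedge mb=m((a:m)\wedge b)$ and $a\vee(b:m)=(am\vee b):m$ for all $a,b$. An $r$-lattice is a modular, principally generated, compactly generated multiplicative lattice with $1$ compact. A multiplicatively closed subset is a nonempty $S\subseteq L_*$ closed under multiplication. An element $a$ is $S$-compact if there exist a compact $b$ and $s\in S$ with $s\cdot a\le b\le a$. *)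

theory Defs
  imports Main
begin

text \<open>Multiplicative lattices: a complete lattice with a commutative, associative
multiplication distributing over arbitrary joins, whose identity is the top element
(written 1 in the paper).\<close>

definition mult_lattice :: "('a::complete_lattice \<Rightarrow> 'a \<Rightarrow> 'a) \<Rightarrow> bool" where
  "mult_lattice mul \<longleftrightarrow>
     (\<forall>a b. mul a b = mul b a) \<and>
     (\<forall>a b c. mul (mul a b) c = mul a (mul b c)) \<and>
     (\<forall>a B. mul a (Sup B) = Sup (mul a ` B)) \<and>
     (\<forall>a. mul a top = a)"

definition compact_el :: "'a::complete_lattice \<Rightarrow> bool" where
  "compact_el a \<longleftrightarrow> (\<forall>B. a \<le> Sup B \<longrightarrow> (\<exists>F. finite F \<and> F \<subseteq> B \<and> a \<le> Sup F))"

definition residual :: "('a::complete_lattice \<Rightarrow> 'a \<Rightarrow> 'a) \<Rightarrow> 'a \<Rightarrow> 'a \<Rightarrow> 'a" where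
  "residual mul a b = Sup {x. mul x b \<le> a}"

definition principal_el :: "('a::complete_lattice \<Rightarrow> 'a \<Rightarrow> 'a) \<Rightarrow> 'a \<Rightarrow> bool" where
  "principal_el mul m \<longleftrightarrow>
     (\<forall>a b. inf a (mul m b) = mul m (inf (residual mul a m) b)) \<and>
     (\<forall>a b. sup a (residual mul b m) = residual mul (sup (mul a m) b) m)"

definition r_lattice :: "('a::complete_lattice \<Rightarrow> 'a \<Rightarrow> 'a) \<Rightarrow> bool" where
  "r_lattice mul \<longleftrightarrow>
     mult_lattice mul \<and>
     (\<forall>a b c::'a. a \<le> c \<longrightarrow> sup a (inf b c) = inf (sup a b) c) \<and>
     (\<forall>a::'a. \<exists>P. (\<forall>p\<in>P. principal_el mul p) \<and> a = Sup P) \<and>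
     (\<forall>a::'a. \<exists>C. (\<forall>c\<in>C. compact_el c) \<and> a = Sup C) \<and>
     compact_el (top::'a)"

definition mult_closed :: "('a::complete_lattice \<Rightarrow> 'a \<Rightarrow> 'a) \<Rightarrow> 'a set \<Rightarrow> bool" where
  "mult_closed mul S \<longleftrightarrow> S \<noteq> {} \<and> (\<forall>s\<in>S. compact_el s) \<and> (\<forall>s\<in>S. \<forall>t\<in>S. mul s t \<in> S)"

definition S_compact :: "('a::complete_lattice \<Rightarrow> 'a \<Rightarrow> 'a) \<Rightarrow> 'a set \<Rightarrow> 'a \<Rightarrow> bool" where
  "S_compact mul S a \<longleftrightarrow> (\<exists>b s. compact_el b \<and> s \<in> S \<and> mul s a \<le> b \<and> b \<le> a)"

end

theory Submission
  imports Defs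
begin

text \<open>For (1), if \<open>s i \<le> b \<le> i\<close> with \<open>b\<close> compact then \<open>s (i j) \<le> b j \<le> i j\<close>, so it suffices that
a compact element times a principal element is compact. This holds because residuation by a
principal element \<open>p\<close> preserves directed joins: the meet axiom gives \<open>d \<sqinter> p = p (d : p)\<close>,
meets distribute over directed joins in a compactly generated lattice, and the join axiom
gives \<open>(a p : p) = a \<squnion> (0 : p)\<close>. For (2), \<open>s (k \<squnion> i) \<le> k \<squnion> s i \<le> k \<squnion> b \<le> k \<squnion> i\<close> and joins of compact elements are
compact.\<close>

definition directed_set :: "'a::complete_lattice set \<Rightarrow> bool" where
  "directed_set D \<longleftrightarrow> (\<forall>G. finite G \<and> G \<subseteq> D \<longrightarrow> (\<exists>d\<in>D. Sup G \<le> d))"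

lemma directed_set_nonempty: "directed_set D \<Longrightarrow> D \<noteq> {}"
  unfolding directed_set_def by (metis empty_iff empty_subsetI finite.emptyI)

lemma compact_el_sup:
  assumes "compact_el a" "compact_el b"
  shows "compact_el (sup a b)"
  unfolding compact_el_def
proof (intro allI impI)
  fix B assume "sup a b \<le> Sup B"
  then obtain F1 F2 where "finite F1" "F1 \<subseteq> B" "a \<le> Sup F1" "finite F2" "F2 \<subseteq> B" "b \<le> Sup F2"
    using assms unfolding compact_el_def by (meson le_sup_iff)
  then show "\<exists>F. finite F \<and> F \<subseteq> B \<and> sup a b \<le> Sup F"
    by (intro exI[of _ "F1 \<union> F2"]) (auto simp: Sup_union_distrib intro: le_supI1 le_supI2)
qed

lemma compact_el_directedD:
  assumes "compact_el x" "directed_set D" "x \<le> Sup D"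
  shows "\<exists>d\<in>D. x \<le> d"
proof -
  obtain F where "finite F" "F \<subseteq> D" "x \<le> Sup F"
    using assms(1,3) unfolding compact_el_def by blast
  moreover obtain d where "d \<in> D" "Sup F \<le> d"
    using assms(2) \<open>finite F\<close> \<open>F \<subseteq> D\<close> unfolding directed_set_def by blast
  ultimately show ?thesis
    by (meson order_trans)
qed

lemma directed_set_image:
  assumes D: "directed_set D" and f: "\<And>x y. x \<le> y \<Longrightarrow> f x \<le> f y"
  shows "directed_set (f ` D)"
  unfolding directed_set_def
proof (intro allI impI)
  fix G assume "finite G \<and> G \<subseteq> f ` D"
  then obtain F where F: "F \<subseteq> D" "finite F" "G = f ` F"
    by (meson finite_subset_image)
  then obtain d where "d \<in> D" "Sup F \<le> d"
    using D unfolding directed_set_def by blast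
  then have "Sup G \<le> f d"
    unfolding F(3) by (meson SUP_least Sup_upper f order_trans)
  then show "\<exists>e\<in>f ` D. Sup G \<le> e"
    using \<open>d \<in> D\<close> by blast
qed

text \<open>The finite subjoins of any set form a directed set with the same join.\<close>

lemma compact_el_directedI:
  assumes directed: "\<And>D. directed_set D \<Longrightarrow> x \<le> Sup D \<Longrightarrow> \<exists>d\<in>D. x \<le> d"
  shows "compact_el (x::'a::complete_lattice)"
  unfolding compact_el_def
proof (intro allI impI)
  fix B :: "'a set" assume "x \<le> Sup B"
  define D where "D = Sup ` {F. finite F \<and> F \<subseteq> B}"
  have "directed_set D"
    unfolding directed_set_def
  proof (intro allI impI)
    fix G assume "finite G \<and> G \<subseteq> D"
    then obtain FF where FF: "FF \<subseteq> {F. finite F \<and> F \<subseteq> B}" "finite FF" "G = Sup ` FF"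
      unfolding D_def by (meson finite_subset_image)
    then have "Sup (\<Union>FF) \<in> D"
      unfolding D_def by blast
    moreover have "Sup G \<le> Sup (\<Union>FF)"
      unfolding FF(3) by (rule SUP_least, rule Sup_subset_mono) auto
    ultimately show "\<exists>d\<in>D. Sup G \<le> d" by blast
  qed
  moreover have "Sup B \<le> Sup D"
    unfolding D_def
  proof (rule Sup_least)
    fix b assume "b \<in> B"
    then have "Sup {b} \<in> Sup ` {F. finite F \<and> F \<subseteq> B}" by blast
    then show "b \<le> Sup (Sup ` {F. finite F \<and> F \<subseteq> B})" by (metis Sup_upper ccpo_Sup_singleton)
  qed
  ultimately obtain d where "d \<in> D" "x \<le> d"
    using directed \<open>x \<le> Sup B\<close> by (meson order_trans)
  then show "\<exists>F. finite F \<and> F \<subseteq> B \<and> x \<le> Sup F"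
    unfolding D_def by blast
qed

lemma inf_Sup_directed_le:
  assumes compactly_generated: "\<forall>a::'a::complete_lattice. \<exists>C. (\<forall>c\<in>C. compact_el c) \<and> a = Sup C"
    and "directed_set D"
  shows "inf (y::'a) (Sup D) \<le> (SUP d\<in>D. inf y d)"
proof -
  obtain K where K: "\<forall>k\<in>K. compact_el k" "inf y (Sup D) = Sup K"
    using spec[OF compactly_generated, of "inf y (Sup D)"] by (elim exE conjE)
  have "k \<le> (SUP d\<in>D. inf y d)" if k: "k \<in> K" for k
  proof -
    have "k \<le> inf y (Sup D)"
      unfolding K(2) using k by (rule Sup_upper)
    then have "k \<le> y" "k \<le> Sup D" by simp_all
    moreover obtain d where "d \<in> D" "k \<le> d"
      using compact_el_directedD[OF _ \<open>directed_set D\<close> \<open>k \<le> Sup D\<close>] K(1) k by blast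
    ultimately have "k \<le> inf y d" by simp
    also have "\<dots> \<le> (SUP d\<in>D. inf y d)"
      using \<open>d \<in> D\<close> by (rule SUP_upper)
    finally show ?thesis .
  qed
  then show ?thesis
    unfolding K(2) by (rule Sup_least)
qed

locale multiplicative_lattice =
  fixes mul :: "'a::complete_lattice \<Rightarrow> 'a \<Rightarrow> 'a"
  assumes mult_lattice: "mult_lattice mul"
begin

lemma mul_commute: "mul a b = mul b a"
  using mult_lattice unfolding mult_lattice_def by blast

lemma mul_assoc: "mul (mul a b) c = mul a (mul b c)"
  using mult_lattice unfolding mult_lattice_def by blast

lemma mul_Sup_distrib: "mul a (Sup B) = (SUP b\<in>B. mul a b)"
  using mult_lattice unfolding mult_lattice_def by blast

lemma mul_top [simp]: "mul a top = a"
  using mult_lattice unfolding mult_lattice_def by blast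

lemma mul_sup_distrib: "mul a (sup b c) = sup (mul a b) (mul a c)"
  using mul_Sup_distrib[of a "{b, c}"] by simp

lemma mul_mono_right: "b \<le> b' \<Longrightarrow> mul a b \<le> mul a b'"
  using mul_sup_distrib[of a b b'] by (simp add: sup_absorb2 le_iff_sup)

lemma mul_mono:
  assumes "a \<le> a'" "b \<le> b'"
  shows "mul a b \<le> mul a' b'"
proof -
  have "mul a b \<le> mul a b'"
    using assms(2) by (rule mul_mono_right)
  also have "\<dots> = mul b' a"
    by (rule mul_commute)
  also have "\<dots> \<le> mul b' a'"
    using assms(1) by (rule mul_mono_right)
  also have "\<dots> = mul a' b'"
    by (rule mul_commute)
  finally show ?thesis .
qed

lemma mul_le_right: "mul a b \<le> b"
  using mul_mono[of a top b b] mul_commute[of top b] by simp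

lemma residual_mul_le: "mul (residual mul a p) p \<le> a"
proof -
  have "mul p (residual mul a p) = (SUP x\<in>{x. mul x p \<le> a}. mul p x)"
    unfolding residual_def by (rule mul_Sup_distrib)
  also have "\<dots> \<le> a"
    by (rule SUP_least) (simp add: mul_commute)
  finally show ?thesis
    using mul_commute[of p "residual mul a p"] by simp
qed

lemma le_residualI: "mul x p \<le> a \<Longrightarrow> x \<le> residual mul a p"
  unfolding residual_def by (auto intro: Sup_upper)

lemma residual_mono: "a \<le> a' \<Longrightarrow> residual mul a p \<le> residual mul a' p"
  unfolding residual_def by (rule Sup_subset_mono) auto

lemma principal_inf_eq:
  assumes "principal_el mul p"
  shows "inf d p = mul p (residual mul d p)"
proof -
  have "inf d (mul p top) = mul p (inf (residual mul d p) top)"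
    using assms unfolding principal_el_def by blast
  then show ?thesis by simp
qed

lemma principal_residual_mul_eq:
  assumes "principal_el mul p"
  shows "residual mul (mul a p) p = sup a (residual mul bot p)"
proof -
  have "sup a (residual mul bot p) = residual mul (sup (mul a p) bot) p"
    using assms unfolding principal_el_def by blast
  then show ?thesis by simp
qed

lemma S_compact_sup_compact:
  assumes "compact_el k" "S_compact mul S i"
  shows "S_compact mul S (sup k i)"
proof -
  obtain b s where b: "compact_el b" "s \<in> S" "mul s i \<le> b" "b \<le> i"
    using assms(2) unfolding S_compact_def by blast
  have "mul s (sup k i) = sup (mul s k) (mul s i)"
    by (rule mul_sup_distrib)
  also have "\<dots> \<le> sup k b"
    using b(3) mul_le_right by (rule_tac sup_mono)
  finally have "mul s (sup k i) \<le> sup k b" .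
  moreover have "sup k b \<le> sup k i"
    using b(4) by (rule sup_mono[OF order_refl])
  ultimately show ?thesis
    unfolding S_compact_def using compact_el_sup[OF assms(1) b(1)] b(2) by blast
qed

end

locale compactly_generated_mult_lattice =
  multiplicative_lattice mul for mul :: "'a::complete_lattice \<Rightarrow> 'a \<Rightarrow> 'a" +
  assumes compactly_generated: "\<forall>a::'a. \<exists>C. (\<forall>c\<in>C. compact_el c) \<and> a = Sup C"
begin

lemma residual_Sup_directed_le:
  assumes p: "principal_el mul p" and D: "directed_set D"
  shows "residual mul (Sup D) p \<le> (SUP d\<in>D. residual mul d p)"
proof -
  define r where "r = residual mul (Sup D) p"
  define a where "a = (SUP d\<in>D. residual mul d p)"
  have "mul p r = inf p (Sup D)"
    unfolding r_def using principal_inf_eq[OF p, of "Sup D"] by (simp add: inf_commute)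
  also have "\<dots> \<le> (SUP d\<in>D. inf p d)"
    by (rule inf_Sup_directed_le[OF compactly_generated D])
  also have "\<dots> = (SUP d\<in>D. mul p (residual mul d p))"
  proof -
    have "inf p d = mul p (residual mul d p)" for d
      using principal_inf_eq[OF p, of d] by (simp add: inf_commute)
    then show ?thesis by simp
  qed
  also have "\<dots> = mul p a"
    unfolding a_def by (simp add: mul_Sup_distrib image_image)
  finally have "r \<le> residual mul (mul a p) p"
    by (intro le_residualI) (simp add: mul_commute)
  also have "residual mul (mul a p) p = sup a (residual mul bot p)"
    by (rule principal_residual_mul_eq[OF p])
  also have "\<dots> = a"
  proof -
    obtain d where "d \<in> D"
      using directed_set_nonempty[OF D] by blast
    have "residual mul bot p \<le> residual mul d p"
      by (rule residual_mono) simp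
    also have "\<dots> \<le> a"
      unfolding a_def using \<open>d \<in> D\<close> by (rule SUP_upper)
    finally have "residual mul bot p \<le> a" .
    then show ?thesis by (rule sup_absorb1)
  qed
  finally show ?thesis
    unfolding r_def a_def .
qed

lemma compact_el_mul_principal:
  assumes p: "principal_el mul p" and x: "compact_el x"
  shows "compact_el (mul x p)"
proof (rule compact_el_directedI)
  fix D assume D: "directed_set D" and "mul x p \<le> Sup D"
  then have "x \<le> residual mul (Sup D) p"
    by (simp add: le_residualI)
  also have "\<dots> \<le> Sup ((\<lambda>d. residual mul d p) ` D)"
    using residual_Sup_directed_le[OF p D] .
  finally have x_le: "x \<le> Sup ((\<lambda>d. residual mul d p) ` D)" .
  have "directed_set ((\<lambda>d. residual mul d p) ` D)"
    using D residual_mono by (rule directed_set_image)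
  then obtain d where "d \<in> D" "x \<le> residual mul d p"
    using compact_el_directedD[OF x _ x_le] by blast
  have "mul x p \<le> mul (residual mul d p) p"
    using \<open>x \<le> residual mul d p\<close> by (rule mul_mono[OF _ order_refl])
  also have "\<dots> \<le> d"
    by (rule residual_mul_le)
  finally show "\<exists>d\<in>D. mul x p \<le> d"
    using \<open>d \<in> D\<close> by blast
qed

lemma S_compact_mul_principal:
  assumes "principal_el mul j" "S_compact mul S i"
  shows "S_compact mul S (mul i j)"
proof -
  obtain b s where b: "compact_el b" "s \<in> S" "mul s i \<le> b" "b \<le> i"
    using assms(2) unfolding S_compact_def by blast
  have "mul s (mul i j) \<le> mul b j"
    using mul_mono[OF b(3) order_refl] by (simp add: mul_assoc)
  moreover have "mul b j \<le> mul i j"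
    using b(4) by (rule mul_mono[OF _ order_refl])
  ultimately show ?thesis
    unfolding S_compact_def using compact_el_mul_principal[OF assms(1) b(1)] b(2) by blast
qed

end

theorem mainTheorem7:
  fixes mul :: "'a::complete_lattice \<Rightarrow> 'a \<Rightarrow> 'a" and S :: "'a set"
  assumes "r_lattice mul"
    and "mult_closed mul S"
    and "top \<in> S"
    and "bot \<notin> S"
  shows "(\<forall>i j. principal_el mul j \<and> S_compact mul S i \<longrightarrow> S_compact mul S (mul i j)) \<and>
         (\<forall>i k. compact_el k \<and> S_compact mul S i \<longrightarrow> S_compact mul S (sup k i))"
proof -
  have "mult_lattice mul" "\<forall>a::'a. \<exists>C. (\<forall>c\<in>C. compact_el c) \<and> a = Sup C"
    using assms(1) unfolding r_lattice_def by blast+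
  then interpret compactly_generated_mult_lattice mul
    by (intro compactly_generated_mult_lattice.intro multiplicative_lattice.intro
        compactly_generated_mult_lattice_axioms.intro)
  show ?thesis
    by (blast intro: S_compact_mul_principal S_compact_sup_compact)
qed

end
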